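(* Let $X_1,X_2,\ldots$ be independent random variables, each with density $e^{x-1}$ for $x\le1$ and $0$ for $x>1$; let $S_0=0$, $S_j=X_1+\cdots+X_j$, and let $f_m$ denote the density of $S_m$, i.e. $f_m(x)=\frac{(m-x)^{m-1}}{e^{m-x}(m-1)!}$ for $x\le m$ and $f_m(x)=0$ for $x>m$. For integers $m\ge1$ and reals $x,y$ define $$R_m(x,y)=\frac{d}{dx}\mathbf{P}\Big[\max_{0\le j\le m-1}S_j<y,\ S_m\le x\Big],$$ the density of the event $\{\max_{0\le j\le m-1}S_j<y,\ S_m=x\}$. Then for every integer $n\ge2$, real $y>0$, real $x$ and real $a\ge1$, $$R_n(x,y)=f_n(x)-f_n(y+a)+\int_0^1\sum_{k=1}^{n-1}R_k(y+\xi,y)\big(f_{n-k}(a-\xi)-f_{n-k}(x-y-\xi)\big)\,d\xi.$$ *)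

theory Defs
  imports "HOL-Probability.Probability"
begin

definition psum :: "(nat \<Rightarrow> 'a \<Rightarrow> real) \<Rightarrow> nat \<Rightarrow> 'a \<Rightarrow> real" where
  "psum X j \<omega> = (\<Sum>i=1..j. X i \<omega>)"

definition fdens :: "nat \<Rightarrow> real \<Rightarrow> real" where
  "fdens m x = (if x \<le> real m
     then (real m - x) ^ (m - 1) / (exp (real m - x) * fact (m - 1)) else 0)"

definition Rdens :: "'a measure \<Rightarrow> (nat \<Rightarrow> 'a \<Rightarrow> real) \<Rightarrow> nat \<Rightarrow> real \<Rightarrow> real \<Rightarrow> real" where
  "Rdens M X m x y = deriv (\<lambda>t. measure M
      {\<omega> \<in> space M. (\<forall>j<m. psum X j \<omega> < y) \<and> psum X m \<omega> \<le> t}) x"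

end

theory Submission
  imports Defs
begin

(* Write R_m for the density of S_m on the event that S_0, ..., S_{m-1} all lie below y.
   Since X_{m+1} is independent of the past, R_1 = f_1 and R_{m+1} = (R_m 1_{(-oo,y)}) * f_1.
   Splitting the law of S_n according to min(n, tau), where tau is the first index with
   S_tau >= y, gives f_n = R_n + sum_{k<n} (R_k 1_{[y,oo)}) * f_{n-k}: first as densities,
   hence pointwise, because for n >= 2 all terms are continuous. R_n vanishes on [y+1, oo),
   in particular at y + a, and R_k 1_{[y,oo)} is supported in [y, y+1]; subtracting the
   identities at x and at y + a gives the claim, since R_m coincides with the derivative
   defining Rdens wherever R_m is continuous. *)

section \<open>The densities \<open>f\<^sub>m\<close>\<close>

lemma power_div_fact_le_exp:
  fixes u :: real
  assumes "0 \<le> u"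
  shows "u ^ n / fact n \<le> exp u"
proof -
  have s: "summable (\<lambda>k. u ^ k /\<^sub>R fact k)"
    using exp_converges sums_summable by blast
  have "(\<Sum>k\<in>{n}. u ^ k /\<^sub>R fact k) \<le> (\<Sum>k. u ^ k /\<^sub>R fact k)"
    by (rule sum_le_suminf[OF s]) (use assms in auto)
  also have "\<dots> = exp u"
    using exp_converges sums_unique by metis
  finally show ?thesis
    by (simp add: divide_inverse mult.commute)
qed

lemma fdens_nonneg: "0 \<le> fdens m t"
  unfolding fdens_def by auto

lemma fdens_le_1: "fdens m t \<le> 1"
proof (cases "t \<le> real m")
  case True
  then have "(real m - t) ^ (m - 1) / fact (m - 1) \<le> exp (real m - t)"
    by (intro power_div_fact_le_exp) auto
  with True show ?thesis
    by (simp add: fdens_def divide_simps mult.commute)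
qed (simp add: fdens_def)

lemma abs_fdens_le_1: "\<bar>fdens m t\<bar> \<le> 1"
  using fdens_nonneg fdens_le_1 by (simp add: abs_le_iff)

lemma borel_measurable_fdens [measurable]: "fdens m \<in> borel_measurable borel"
  unfolding fdens_def by measurable

lemma fdens_1: "fdens 1 = (\<lambda>t. if t \<le> 1 then exp (t - 1) else 0)"
  by (simp add: fun_eq_iff fdens_def exp_diff exp_minus field_simps)

lemma isCont_fdens:
  assumes "t \<noteq> real m"
  shows "isCont (fdens m) t"
proof (cases "t < real m")
  case True
  have "continuous_on {..<real m} (fdens m)"
  proof (rule continuous_on_cong[THEN iffD1])
    show "continuous_on {..<real m} (\<lambda>t. (real m - t) ^ (m - 1) / (exp (real m - t) * fact (m - 1)))"
      by (intro continuous_intros) auto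
  qed (auto simp: fdens_def)
  with True show ?thesis
    using continuous_on_eq_continuous_at[of "{..<real m}"] by auto
next
  case False
  with assms have "t \<in> {real m<..}"
    by auto
  moreover have "continuous_on {real m<..} (fdens m)"
    by (rule continuous_on_cong[THEN iffD1, of _ _ "\<lambda>_. 0"]) (auto simp: fdens_def)
  ultimately show ?thesis
    using continuous_on_eq_continuous_at[of "{real m<..}"] by auto
qed

lemma isCont_fdens_ge_2:
  assumes "2 \<le> m"
  shows "isCont (fdens m) t"
proof -
  have "fdens m = (\<lambda>t. (max (real m - t) 0) ^ (m - 1) / (exp (real m - t) * fact (m - 1)))"
    using assms by (auto simp: fdens_def fun_eq_iff max_def)
  then show ?thesis
    by (auto intro!: continuous_intros)
qed

lemma has_integral_fdens_Suc:
  assumes m: "1 \<le> m" and z: "z - 1 \<le> real m"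
  shows "((\<lambda>s. exp (z - real m - 1) / fact (m - 1) * (real m - s) ^ (m - 1)) has_integral fdens (Suc m) z)
    {z - 1..real m}"
proof -
  define C where "C = exp (z - real m - 1) / fact (m - 1)"
  define F where "F s = - C * (real m - s) ^ m / real m" for s
  have "((\<lambda>s. C * (real m - s) ^ (m - 1)) has_integral F (real m) - F (z - 1)) {z - 1..real m}"
  proof (rule fundamental_theorem_of_calculus)
    fix s
    have "(F has_real_derivative (- C / real m * (real m * (real m - s) ^ (m - 1) * (- 1))))
        (at s within {z - 1..real m})"
      unfolding F_def by (auto intro!: derivative_eq_intros)
    then show "(F has_vector_derivative (C * (real m - s) ^ (m - 1))) (at s within {z - 1..real m})"
      using m by (simp add: has_real_derivative_iff_has_vector_derivative field_simps)
  qed (use z in auto)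
  moreover have "F (real m) - F (z - 1) = fdens (Suc m) z"
  proof -
    have "fact m = real m * fact (m - 1)"
      using m by (metis fact_reduce of_nat_fact not_one_le_zero of_nat_eq_0_iff gr0I)
    moreover have "exp (z - (1 + real m)) * exp (1 + real m - z) = 1"
      by (simp add: exp_add[symmetric])
    ultimately show ?thesis
      using m z by (simp add: fdens_def F_def C_def field_simps power_0_left)
  qed
  ultimately show ?thesis
    by (simp add: C_def)
qed

lemma fdens_Suc_convolution:
  assumes "1 \<le> m"
  shows "(\<integral>\<^sup>+s. ennreal (fdens m s) * ennreal (fdens 1 (z - s)) \<partial>lborel) = ennreal (fdens (Suc m) z)"
proof -
  define C where "C = exp (z - real m - 1) / fact (m - 1)"
  have integrand: "ennreal (fdens m s) * ennreal (fdens 1 (z - s))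
      = ennreal (indicator {z - 1..real m} s * (C * (real m - s) ^ (m - 1)))" for s
  proof (cases "s \<le> real m \<and> z - s \<le> 1")
    case True
    have "fdens m s * fdens 1 (z - s)
        = (real m - s) ^ (m - 1) / fact (m - 1) * (exp (z - s - 1) / exp (real m - s))"
      unfolding fdens_1 using True by (simp add: fdens_def)
    also have "exp (z - s - 1) / exp (real m - s) = exp (z - real m - 1)"
      by (simp add: exp_diff[symmetric])
    finally have "fdens m s * fdens 1 (z - s) = C * (real m - s) ^ (m - 1)"
      by (simp add: C_def)
    with True show ?thesis
      by (simp add: ennreal_mult''[symmetric] fdens_nonneg indicator_def)
  qed (auto simp: fdens_def)
  show ?thesis
  proof (cases "z - 1 \<le> real m")
    case True
    show ?thesis
      unfolding integrand
      by (rule nn_integral_has_integral_lebesgue[OF _ has_integral_fdens_Suc[OF assms True, folded C_def]])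
         (simp add: C_def)
  next
    case False
    then show ?thesis
      unfolding integrand by (simp add: fdens_def indicator_def)
  qed
qed

section \<open>Convolution\<close>

definition conv :: "(real \<Rightarrow> real) \<Rightarrow> (real \<Rightarrow> real) \<Rightarrow> real \<Rightarrow> real" where
  "conv f g z = (LINT s|lborel. f s * g (z - s))"

lemma integrable_conv:
  fixes f g :: "real \<Rightarrow> real"
  assumes f: "integrable lborel f" and g [measurable]: "g \<in> borel_measurable borel"
    and B: "\<And>x. \<bar>g x\<bar> \<le> B"
  shows "integrable lborel (\<lambda>s. f s * g (z - s))"
proof -
  have [measurable]: "f \<in> borel_measurable borel"
    using borel_measurable_integrable[OF f] by simp
  have "integrable lborel (\<lambda>s. B * f s)"
    using f by (rule integrable_mult_right)
  then show ?thesis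
  proof (rule Bochner_Integration.integrable_bound)
    show "AE s in lborel. norm (f s * g (z - s)) \<le> norm (B * f s)"
    proof (rule AE_I2)
      fix s
      have "\<bar>f s\<bar> * \<bar>g (z - s)\<bar> \<le> \<bar>f s\<bar> * \<bar>B\<bar>"
        using B[of "z - s"] by (intro mult_left_mono) auto
      then show "norm (f s * g (z - s)) \<le> norm (B * f s)"
        by (simp add: abs_mult mult.commute)
    qed
  qed measurable
qed

lemma nn_integral_conv:
  assumes "integrable lborel f" "g \<in> borel_measurable borel" "\<And>x. \<bar>g x\<bar> \<le> B"
    and "\<And>x. 0 \<le> f x" "\<And>x. 0 \<le> g x"
  shows "(\<integral>\<^sup>+s. ennreal (f s) * ennreal (g (z - s)) \<partial>lborel) = ennreal (conv f g z)"
  using nn_integral_eq_integral[OF integrable_conv[OF assms(1-3)]] assms(4,5)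
  by (simp add: conv_def ennreal_mult)

lemma conv_nonneg: "(\<And>x. 0 \<le> f x) \<Longrightarrow> (\<And>x. 0 \<le> g x) \<Longrightarrow> 0 \<le> conv f g z"
  unfolding conv_def by (rule Bochner_Integration.integral_nonneg) auto

lemma nn_integral_conv_translate:
  fixes \<phi> :: "real \<Rightarrow> ennreal"
  assumes f: "integrable lborel f" and g [measurable]: "g \<in> borel_measurable borel"
    and g_bound: "\<And>x. \<bar>g x\<bar> \<le> B" and nonneg: "\<And>x. 0 \<le> f x" "\<And>x. 0 \<le> g x"
    and [measurable]: "\<phi> \<in> borel_measurable borel"
  shows "(\<integral>\<^sup>+s. ennreal (f s) * (\<integral>\<^sup>+x. ennreal (g x) * \<phi> (s + x) \<partial>lborel) \<partial>lborel)
    = (\<integral>\<^sup>+z. ennreal (conv f g z) * \<phi> z \<partial>lborel)"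
proof -
  have [measurable]: "f \<in> borel_measurable borel"
    using borel_measurable_integrable[OF f] by simp
  have "(\<integral>\<^sup>+s. ennreal (f s) * (\<integral>\<^sup>+x. ennreal (g x) * \<phi> (s + x) \<partial>lborel) \<partial>lborel)
      = (\<integral>\<^sup>+s. \<integral>\<^sup>+z. ennreal (f s) * ennreal (g (z - s)) * \<phi> z \<partial>lborel \<partial>lborel)"
  proof (rule nn_integral_cong)
    fix s
    have "(\<integral>\<^sup>+x. ennreal (g x) * \<phi> (s + x) \<partial>lborel) = (\<integral>\<^sup>+z. ennreal (g (z - s)) * \<phi> z \<partial>lborel)"
      using nn_integral_real_affine[of "\<lambda>z. ennreal (g (z - s)) * \<phi> z" 1 s] by simp
    then show "ennreal (f s) * (\<integral>\<^sup>+x. ennreal (g x) * \<phi> (s + x) \<partial>lborel)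
        = (\<integral>\<^sup>+z. ennreal (f s) * ennreal (g (z - s)) * \<phi> z \<partial>lborel)"
      by (simp add: nn_integral_cmult mult.assoc)
  qed
  also have "\<dots> = (\<integral>\<^sup>+z. \<integral>\<^sup>+s. ennreal (f s) * ennreal (g (z - s)) * \<phi> z \<partial>lborel \<partial>lborel)"
    by (rule lborel_pair.Fubini') measurable
  also have "\<dots> = (\<integral>\<^sup>+z. ennreal (conv f g z) * \<phi> z \<partial>lborel)"
    using nn_integral_conv[OF f g g_bound nonneg] by (simp add: nn_integral_multc)
  finally show ?thesis .
qed

lemma isCont_conv:
  assumes f: "integrable lborel f" and g [measurable]: "g \<in> borel_measurable borel"
    and B: "\<And>x. \<bar>g x\<bar> \<le> B" and g_cont: "\<And>x. x \<noteq> p \<Longrightarrow> isCont g x"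
  shows "isCont (conv f g) z"
proof (rule continuous_at_sequentiallyI)
  fix x :: "nat \<Rightarrow> real"
  assume x: "x \<longlonglongrightarrow> z"
  have [measurable]: "f \<in> borel_measurable borel"
    using borel_measurable_integrable[OF f] by simp
  show "(\<lambda>i. conv f g (x i)) \<longlonglongrightarrow> conv f g z"
    unfolding conv_def
  proof (rule integral_dominated_convergence[where w="\<lambda>s. B * \<bar>f s\<bar>"])
    show "integrable lborel (\<lambda>s. B * \<bar>f s\<bar>)"
      using f by (intro integrable_mult_right integrable_abs)
    show "AE s in lborel. norm (f s * g (x i - s)) \<le> B * \<bar>f s\<bar>" for i
    proof (rule AE_I2)
      fix s
      have "\<bar>f s\<bar> * \<bar>g (x i - s)\<bar> \<le> \<bar>f s\<bar> * B"
        using B by (intro mult_left_mono) auto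
      then show "norm (f s * g (x i - s)) \<le> B * \<bar>f s\<bar>"
        by (simp add: abs_mult mult.commute)
    qed
    show "AE s in lborel. (\<lambda>i. f s * g (x i - s)) \<longlonglongrightarrow> f s * g (z - s)"
      using AE_lborel_singleton[of "z - p"]
    proof eventually_elim
      case (elim s)
      then have "isCont g (z - s)"
        by (intro g_cont) auto
      moreover have "(\<lambda>i. x i - s) \<longlonglongrightarrow> z - s"
        using x by (intro tendsto_intros)
      ultimately have "(\<lambda>i. g (x i - s)) \<longlonglongrightarrow> g (z - s)"
        by (rule isCont_tendsto_compose)
      then show ?case
        by (intro tendsto_intros)
    qed
  qed measurable
qed

lemma conv_indicator_atLeast_eq_integral:
  assumes f: "integrable lborel f" and g: "g \<in> borel_measurable borel" "\<And>x. \<bar>g x\<bar> \<le> B"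
    and f_vanishes: "\<And>s. y + 1 < s \<Longrightarrow> f s = 0"
  shows "(\<lambda>\<xi>. f (y + \<xi>) * g (z - y - \<xi>)) integrable_on {0..1}"
    and "conv (\<lambda>s. f s * indicator {y..} s) g z = integral {0..1} (\<lambda>\<xi>. f (y + \<xi>) * g (z - y - \<xi>))"
proof -
  define F where "F s = f s * indicator {y..} s * g (z - s)" for s
  define G where "G \<xi> = f (y + \<xi>) * g (z - y - \<xi>)" for \<xi>
  have "integrable lborel (\<lambda>s. f s * indicator {y..} s)"
    using integrable_mult_indicator[of "{y..}" lborel f] f by (simp add: mult.commute)
  then have "integrable lborel F"
    unfolding F_def by (rule integrable_conv[OF _ g])
  then have "integrable lborel (\<lambda>\<xi>. F (y + 1 * \<xi>))"
    by (rule lborel_integrable_real_affine) simp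
  moreover have shift: "F (y + 1 * \<xi>) = indicator {0..1} \<xi> * G \<xi>" for \<xi>
    using f_vanishes[of "y + \<xi>"]
    by (cases "\<xi> \<le> 1") (auto simp: F_def G_def indicator_def algebra_simps)
  ultimately have G: "set_integrable lborel {0..1} G"
    unfolding set_integrable_def by simp
  then show "(\<lambda>\<xi>. f (y + \<xi>) * g (z - y - \<xi>)) integrable_on {0..1}"
    using set_borel_integral_eq_integral(1) by (simp add: G_def[abs_def])
  have "conv (\<lambda>s. f s * indicator {y..} s) g z = (LINT s|lborel. F s)"
    by (simp add: conv_def F_def)
  also have "\<dots> = (LINT \<xi>|lborel. F (y + 1 * \<xi>))"
    using lborel_integral_real_affine[of 1 F y] by simp
  also have "\<dots> = (LINT \<xi>|lborel. indicator {0..1} \<xi> * G \<xi>)"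
    by (simp only: shift)
  also have "\<dots> = integral {0..1} G"
    using set_borel_integral_eq_integral(2)[OF G] by (simp add: set_lebesgue_integral_def)
  finally show "conv (\<lambda>s. f s * indicator {y..} s) g z = integral {0..1} (\<lambda>\<xi>. f (y + \<xi>) * g (z - y - \<xi>))"
    by (simp add: G_def[abs_def])
qed

lemma has_field_derivative_integral_atMost:
  fixes h :: "real \<Rightarrow> real"
  assumes h: "integrable lborel h" and h_cont: "isCont h x"
  shows "((\<lambda>t. LINT z|lborel. indicator {..t} z * h z) has_field_derivative h x) (at x)"
proof -
  define a where "a = x - 1"
  define C where "C = (LINT z|lborel. indicator {..<a} z * h z)"
  have [measurable]: "h \<in> borel_measurable borel"
    using borel_measurable_integrable[OF h] by simp
  have indicator_int: "integrable lborel (\<lambda>z. indicator S z * h z)" if "S \<in> sets borel" for S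
    using integrable_mult_indicator[of S lborel h] that h by simp
  have on_Icc: "set_integrable lborel {a..t} h" for t
    unfolding set_integrable_def by (rule integrable_mult_indicator) (use h in auto)
  have split: "(LINT z|lborel. indicator {..t} z * h z) = C + integral {a..t} h" if "a < t" for t
  proof -
    have "(\<lambda>z. indicator {..t} z * h z) = (\<lambda>z. indicator {..<a} z * h z + indicator {a..t} z * h z)"
      using that by (auto simp: indicator_def fun_eq_iff)
    then have "(LINT z|lborel. indicator {..t} z * h z)
        = (LINT z|lborel. indicator {..<a} z * h z + indicator {a..t} z * h z)"
      by simp
    also have "\<dots> = C + (LINT z|lborel. indicator {a..t} z * h z)"
      unfolding C_def by (intro Bochner_Integration.integral_add indicator_int) auto
    also have "(LINT z|lborel. indicator {a..t} z * h z) = integral {a..t} h"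
      using set_borel_integral_eq_integral(2)[OF on_Icc] by (simp add: set_lebesgue_integral_def)
    finally show ?thesis .
  qed
  have "((\<lambda>u. integral {a..u} h) has_vector_derivative h x) (at x within ({a..x + 1} - {}))"
    by (rule integral_has_vector_derivative_continuous_at[OF set_borel_integral_eq_integral(1)[OF on_Icc]])
       (auto simp: a_def intro: continuous_at_imp_continuous_within h_cont)
  then have "((\<lambda>u. C + integral {a..u} h) has_field_derivative h x) (at x)"
    by (auto simp: at_within_Icc_at a_def has_real_derivative_iff_has_vector_derivative
             intro!: derivative_eq_intros)
  then show ?thesis
    by (rule has_field_derivative_transform_within_open[where S="{a<..}"]) (auto simp: a_def split)
qed


section \<open>Densities on events\<close>

(* r is a density of the sub-probability measure B \<mapsto> P(A \<inter> {Z \<in> B}). *)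
definition event_density :: "'a measure \<Rightarrow> ('a \<Rightarrow> bool) \<Rightarrow> ('a \<Rightarrow> real) \<Rightarrow> (real \<Rightarrow> real) \<Rightarrow> bool" where
  "event_density M A Z r \<longleftrightarrow> Measurable.pred M A \<and> Z \<in> borel_measurable M \<and>
     r \<in> borel_measurable borel \<and> (\<forall>x. 0 \<le> r x) \<and>
     (\<forall>\<phi> \<in> borel_measurable borel.
        (\<integral>\<^sup>+\<omega>. (if A \<omega> then \<phi> (Z \<omega>) else 0) \<partial>M) = (\<integral>\<^sup>+x. ennreal (r x) * \<phi> x \<partial>lborel))"

lemma event_densityD:
  assumes "event_density M A Z r"
  shows event_density_pred: "Measurable.pred M A"
    and event_density_measurable: "Z \<in> borel_measurable M"
    and event_density_borel_measurable: "r \<in> borel_measurable borel"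
    and event_density_nonneg: "0 \<le> r x"
    and nn_integral_event_density: "\<And>\<phi>. \<phi> \<in> borel_measurable borel \<Longrightarrow>
      (\<integral>\<^sup>+\<omega>. (if A \<omega> then \<phi> (Z \<omega>) else 0) \<partial>M) = (\<integral>\<^sup>+x. ennreal (r x) * \<phi> x \<partial>lborel)"
  using assms unfolding event_density_def by auto

lemma event_densityI:
  assumes "Measurable.pred M A" "Z \<in> borel_measurable M" "r \<in> borel_measurable borel" "\<And>x. 0 \<le> r x"
    and "\<And>\<phi>. \<phi> \<in> borel_measurable borel \<Longrightarrow>
      (\<integral>\<^sup>+\<omega>. (if A \<omega> then \<phi> (Z \<omega>) else 0) \<partial>M) = (\<integral>\<^sup>+x. ennreal (r x) * \<phi> x \<partial>lborel)"
  shows "event_density M A Z r"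
  using assms unfolding event_density_def by auto

lemma distributed_imp_event_density:
  assumes "distributed M lborel Z (\<lambda>x. ennreal (g x))"
    and "g \<in> borel_measurable borel" "\<And>x. 0 \<le> g x"
  shows "event_density M (\<lambda>_. True) Z g"
  using assms distributed_nn_integral[OF assms(1)]
  by (intro event_densityI) (auto dest: distributed_measurable)

lemma event_density_restrict:
  assumes r: "event_density M A Z r" and B [measurable]: "B \<in> sets borel"
  shows "event_density M (\<lambda>\<omega>. A \<omega> \<and> Z \<omega> \<in> B) Z (\<lambda>x. r x * indicator B x)"
proof (rule event_densityI)
  note [measurable] = event_densityD(1-3)[OF r]
  show "Measurable.pred M (\<lambda>\<omega>. A \<omega> \<and> Z \<omega> \<in> B)" "Z \<in> borel_measurable M"
    "(\<lambda>x. r x * indicator B x) \<in> borel_measurable borel"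
    by measurable
  show "0 \<le> r x * indicator B x" for x
    using event_density_nonneg[OF r] by simp
  fix \<phi> :: "real \<Rightarrow> ennreal"
  assume [measurable]: "\<phi> \<in> borel_measurable borel"
  have "(\<integral>\<^sup>+\<omega>. (if A \<omega> \<and> Z \<omega> \<in> B then \<phi> (Z \<omega>) else 0) \<partial>M)
      = (\<integral>\<^sup>+\<omega>. (if A \<omega> then (\<lambda>x. if x \<in> B then \<phi> x else 0) (Z \<omega>) else 0) \<partial>M)"
    by (intro nn_integral_cong) simp
  also have "\<dots> = (\<integral>\<^sup>+x. ennreal (r x) * (if x \<in> B then \<phi> x else 0) \<partial>lborel)"
    by (rule nn_integral_event_density[OF r]) measurable
  also have "\<dots> = (\<integral>\<^sup>+x. ennreal (r x * indicator B x) * \<phi> x \<partial>lborel)"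
    by (intro nn_integral_cong) (simp add: indicator_def)
  finally show "(\<integral>\<^sup>+\<omega>. (if A \<omega> \<and> Z \<omega> \<in> B then \<phi> (Z \<omega>) else 0) \<partial>M)
      = (\<integral>\<^sup>+x. ennreal (r x * indicator B x) * \<phi> x \<partial>lborel)" .
qed

lemma if_Bex_eq_sum:
  assumes "finite I" and disjoint: "\<And>i j. i \<in> I \<Longrightarrow> j \<in> I \<Longrightarrow> E i \<Longrightarrow> E j \<Longrightarrow> i = j"
  shows "(if \<exists>i\<in>I. E i then c else 0) = (\<Sum>i\<in>I. if E i then c else (0 :: 'a :: comm_monoid_add))"
proof (cases "\<exists>i\<in>I. E i")
  case True
  then obtain i where "i \<in> I" "E i"
    by blast
  then have "E j \<longleftrightarrow> j = i" if "j \<in> I" for j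
    using disjoint[OF that \<open>i \<in> I\<close>] by blast
  then have "(\<Sum>j\<in>I. if E j then c else 0) = (\<Sum>j\<in>I. if j = i then c else 0)"
    by (intro sum.cong) simp_all
  with \<open>i \<in> I\<close> \<open>finite I\<close> True show ?thesis
    by simp
qed simp

lemma event_density_Bex:
  assumes "finite I" and Z [measurable]: "Z \<in> borel_measurable M"
    and r: "\<And>i. i \<in> I \<Longrightarrow> event_density M (E i) Z (r i)"
    and disjoint: "\<And>i j \<omega>. i \<in> I \<Longrightarrow> j \<in> I \<Longrightarrow> E i \<omega> \<Longrightarrow> E j \<omega> \<Longrightarrow> i = j"
  shows "event_density M (\<lambda>\<omega>. \<exists>i\<in>I. E i \<omega>) Z (\<lambda>x. \<Sum>i\<in>I. r i x)"
proof (rule event_densityI)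
  have [measurable]: "r i \<in> borel_measurable borel" if "i \<in> I" for i
    using r[OF that] by (rule event_density_borel_measurable)
  show "Measurable.pred M (\<lambda>\<omega>. \<exists>i\<in>I. E i \<omega>)"
    using event_density_pred[OF r] by (intro pred_intros_finite[OF \<open>finite I\<close>])
  show "(\<lambda>x. \<Sum>i\<in>I. r i x) \<in> borel_measurable borel"
    by (intro borel_measurable_sum) simp
  have r_nonneg: "i \<in> I \<Longrightarrow> 0 \<le> r i x" for i x
    by (rule event_density_nonneg[OF r])
  then show "0 \<le> (\<Sum>i\<in>I. r i x)" for x
    by (intro sum_nonneg)
  fix \<phi> :: "real \<Rightarrow> ennreal"
  assume [measurable]: "\<phi> \<in> borel_measurable borel"
  have "(\<integral>\<^sup>+\<omega>. (if \<exists>i\<in>I. E i \<omega> then \<phi> (Z \<omega>) else 0) \<partial>M)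
      = (\<integral>\<^sup>+\<omega>. (\<Sum>i\<in>I. if E i \<omega> then \<phi> (Z \<omega>) else 0) \<partial>M)"
    using \<open>finite I\<close> disjoint by (intro nn_integral_cong if_Bex_eq_sum) blast+
  also have "\<dots> = (\<Sum>i\<in>I. \<integral>\<^sup>+\<omega>. (if E i \<omega> then \<phi> (Z \<omega>) else 0) \<partial>M)"
  proof (rule nn_integral_sum)
    fix i
    assume "i \<in> I"
    note [measurable] = event_density_pred[OF r[OF this]]
    show "(\<lambda>\<omega>. if E i \<omega> then \<phi> (Z \<omega>) else 0) \<in> borel_measurable M"
      by measurable
  qed
  also have "\<dots> = (\<Sum>i\<in>I. \<integral>\<^sup>+x. ennreal (r i x) * \<phi> x \<partial>lborel)"
  proof (rule sum.cong)
    fix i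
    assume "i \<in> I"
    then show "(\<integral>\<^sup>+\<omega>. (if E i \<omega> then \<phi> (Z \<omega>) else 0) \<partial>M) = (\<integral>\<^sup>+x. ennreal (r i x) * \<phi> x \<partial>lborel)"
      by (intro nn_integral_event_density[OF r]) simp_all
  qed simp
  also have "\<dots> = (\<integral>\<^sup>+x. (\<Sum>i\<in>I. ennreal (r i x) * \<phi> x) \<partial>lborel)"
  proof (rule nn_integral_sum[symmetric])
    fix i
    assume "i \<in> I"
    then show "(\<lambda>x. ennreal (r i x) * \<phi> x) \<in> borel_measurable lborel"
      by measurable
  qed
  also have "\<dots> = (\<integral>\<^sup>+x. ennreal (\<Sum>i\<in>I. r i x) * \<phi> x \<partial>lborel)"
    by (intro nn_integral_cong) (simp add: sum_distrib_right[symmetric] sum_ennreal r_nonneg)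
  finally show "(\<integral>\<^sup>+\<omega>. (if \<exists>i\<in>I. E i \<omega> then \<phi> (Z \<omega>) else 0) \<partial>M)
      = (\<integral>\<^sup>+x. ennreal (\<Sum>i\<in>I. r i x) * \<phi> x \<partial>lborel)" .
qed (fact Z)

lemma event_density_unique:
  assumes r: "event_density M A Z r" and r': "event_density M A Z r'"
    and "\<And>x. isCont r x" "\<And>x. isCont r' x"
  shows "r = r'"
proof -
  note [measurable] = event_densityD(3)[OF r] event_densityD(3)[OF r']
  have "density lborel r = density lborel r'"
  proof (rule measure_eqI)
    fix B :: "real set"
    assume "B \<in> sets (density lborel r)"
    then have [measurable]: "B \<in> sets borel"
      by simp
    have "emeasure (density lborel r) B = (\<integral>\<^sup>+\<omega>. (if A \<omega> then indicator B (Z \<omega>) else 0) \<partial>M)"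
      using nn_integral_event_density[OF r, of "indicator B"] by (simp add: emeasure_density)
    also have "\<dots> = emeasure (density lborel r') B"
      using nn_integral_event_density[OF r', of "indicator B"] by (simp add: emeasure_density)
    finally show "emeasure (density lborel r) B = emeasure (density lborel r') B" .
  qed simp
  then have "AE x in lborel. ennreal (r x) = ennreal (r' x)"
    by (intro sigma_finite_measure.density_unique[OF lborel.sigma_finite_measure_axioms]) auto
  then have "AE x in lborel. r x = r' x"
    by eventually_elim (simp add: event_density_nonneg[OF r] event_density_nonneg[OF r'])
  then have "AE x in lebesgue. x \<in> {x. r x = r' x}"
    using AE_completion by auto
  moreover have "closed {x. r x = r' x}"
    by (intro closed_Collect_eq continuous_at_imp_continuous_on ballI assms(3,4))
  ultimately show ?thesis
    using mem_closed_if_AE_lebesgue by blast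
qed

context prob_space
begin

lemma integrable_event_density:
  assumes r: "event_density M A Z r"
  shows "integrable lborel r"
proof (rule integrableI_nonneg)
  have "(\<integral>\<^sup>+x. ennreal (r x) \<partial>lborel) = (\<integral>\<^sup>+\<omega>. (if A \<omega> then 1 else 0) \<partial>M)"
    using nn_integral_event_density[OF r, of "\<lambda>_. 1"] by simp
  also have "\<dots> \<le> (\<integral>\<^sup>+\<omega>. 1 \<partial>M)"
    by (intro nn_integral_mono) auto
  finally show "(\<integral>\<^sup>+x. ennreal (r x) \<partial>lborel) < \<infinity>"
    by (simp add: emeasure_space_1 le_less_trans)
qed (use event_densityD[OF r] in auto)

lemma deriv_measure_event_density:
  assumes r: "event_density M A Z r" and "isCont r t"
  shows "deriv (\<lambda>t. measure M {\<omega> \<in> space M. A \<omega> \<and> Z \<omega> \<le> t}) t = r t"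
proof -
  note [measurable] = event_densityD(1-3)[OF r]
  have r_int: "integrable lborel r"
    using r by (rule integrable_event_density)
  have cdf: "measure M {\<omega> \<in> space M. A \<omega> \<and> Z \<omega> \<le> s} = (LINT z|lborel. indicator {..s} z * r z)" for s
  proof -
    have "{\<omega> \<in> space M. A \<omega> \<and> Z \<omega> \<le> s} \<in> sets M"
      using r by measurable
    then have "emeasure M {\<omega> \<in> space M. A \<omega> \<and> Z \<omega> \<le> s}
        = (\<integral>\<^sup>+\<omega>. indicator {\<omega> \<in> space M. A \<omega> \<and> Z \<omega> \<le> s} \<omega> \<partial>M)"
      by simp
    also have "\<dots> = (\<integral>\<^sup>+\<omega>. (if A \<omega> then indicator {..s} (Z \<omega>) else 0) \<partial>M)"
      by (intro nn_integral_cong) (auto simp: indicator_def)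
    also have "\<dots> = (\<integral>\<^sup>+z. ennreal (indicator {..s} z * r z) \<partial>lborel)"
      by (subst nn_integral_event_density[OF r]) (auto intro!: nn_integral_cong simp: indicator_def)
    also have "\<dots> = ennreal (LINT z|lborel. indicator {..s} z * r z)"
      using integrable_mult_indicator[of "{..s}" lborel r] r_int r
      by (intro nn_integral_eq_integral) (auto simp: event_density_nonneg)
    finally show ?thesis
      using r by (simp add: measure_def event_density_nonneg)
  qed
  show ?thesis
    unfolding cdf by (rule DERIV_imp_deriv[OF has_field_derivative_integral_atMost[OF r_int assms(2)]])
qed

lemma nn_integral_indep_var:
  assumes ind: "indep_var N U N' V" and [measurable]: "\<Phi> \<in> borel_measurable (N \<Otimes>\<^sub>M N')"
  shows "(\<integral>\<^sup>+\<omega>. \<Phi> (U \<omega>, V \<omega>) \<partial>M) = (\<integral>\<^sup>+\<omega>. \<integral>\<^sup>+\<omega>'. \<Phi> (U \<omega>, V \<omega>') \<partial>M \<partial>M)"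
proof -
  have [measurable]: "U \<in> measurable M N" "V \<in> measurable M N'"
    using ind by (auto dest: indep_var_rv1 indep_var_rv2)
  interpret U: prob_space "distr M N U"
    by (rule prob_space_distr) simp
  interpret V: prob_space "distr M N' V"
    by (rule prob_space_distr) simp
  interpret UV: pair_sigma_finite "distr M N U" "distr M N' V" ..
  have "(\<integral>\<^sup>+\<omega>. \<Phi> (U \<omega>, V \<omega>) \<partial>M) = (\<integral>\<^sup>+p. \<Phi> p \<partial>distr M (N \<Otimes>\<^sub>M N') (\<lambda>\<omega>. (U \<omega>, V \<omega>)))"
    by (subst nn_integral_distr) simp_all
  also have "\<dots> = (\<integral>\<^sup>+p. \<Phi> p \<partial>(distr M N U \<Otimes>\<^sub>M distr M N' V))"
    using ind by (simp add: indep_var_distribution_eq)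
  also have "\<dots> = (\<integral>\<^sup>+u. \<integral>\<^sup>+v. \<Phi> (u, v) \<partial>distr M N' V \<partial>distr M N U)"
    by (subst V.nn_integral_fst[symmetric]) (simp_all cong: measurable_cong_sets)
  also have "\<dots> = (\<integral>\<^sup>+\<omega>. \<integral>\<^sup>+v. \<Phi> (U \<omega>, v) \<partial>distr M N' V \<partial>M)"
    by (simp add: nn_integral_distr)
  also have "\<dots> = (\<integral>\<^sup>+\<omega>. \<integral>\<^sup>+\<omega>'. \<Phi> (U \<omega>, V \<omega>') \<partial>M \<partial>M)"
  proof (rule nn_integral_cong)
    fix \<omega>
    assume "\<omega> \<in> space M"
    then have "(\<lambda>v. \<Phi> (U \<omega>, v)) \<in> borel_measurable N'"
      by (intro measurable_Pair2[of \<Phi> N]) (auto intro: measurable_space[of U M N])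
    then show "(\<integral>\<^sup>+v. \<Phi> (U \<omega>, v) \<partial>distr M N' V) = (\<integral>\<^sup>+\<omega>'. \<Phi> (U \<omega>, V \<omega>') \<partial>M)"
      by (simp add: nn_integral_distr)
  qed
  finally show ?thesis .
qed

lemma event_density_add_indep:
  assumes ind: "indep_var N U N' V"
    and [measurable]: "Measurable.pred N P" "h \<in> borel_measurable N" "v \<in> borel_measurable N'"
    and r: "event_density M (\<lambda>\<omega>. P (U \<omega>)) (\<lambda>\<omega>. h (U \<omega>)) r"
    and g: "event_density M (\<lambda>_. True) (\<lambda>\<omega>. v (V \<omega>)) g" and g_le: "\<And>x. g x \<le> B"
  shows "event_density M (\<lambda>\<omega>. P (U \<omega>)) (\<lambda>\<omega>. h (U \<omega>) + v (V \<omega>)) (conv r g)"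
proof (rule event_densityI)
  note [measurable] = event_densityD(1,3)[OF r] event_densityD(3)[OF g]
  have [measurable]: "U \<in> measurable M N" "V \<in> measurable M N'"
    using ind by (auto dest: indep_var_rv1 indep_var_rv2)
  have g_bound: "\<bar>g x\<bar> \<le> B" for x
    using g_le event_density_nonneg[OF g] by (simp add: abs_le_iff)
  show "Measurable.pred M (\<lambda>\<omega>. P (U \<omega>))" "(\<lambda>\<omega>. h (U \<omega>) + v (V \<omega>)) \<in> borel_measurable M"
    by measurable
  show "conv r g \<in> borel_measurable borel"
    unfolding conv_def by measurable
  show "0 \<le> conv r g x" for x
    by (intro conv_nonneg event_density_nonneg[OF r] event_density_nonneg[OF g])
  fix \<phi> :: "real \<Rightarrow> ennreal"
  assume [measurable]: "\<phi> \<in> borel_measurable borel"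
  define \<psi> where "\<psi> s = (\<integral>\<^sup>+x. ennreal (g x) * \<phi> (s + x) \<partial>lborel)" for s
  have [measurable]: "\<psi> \<in> borel_measurable borel"
    unfolding \<psi>_def by measurable
  have "(\<integral>\<^sup>+\<omega>. (if P (U \<omega>) then \<phi> (h (U \<omega>) + v (V \<omega>)) else 0) \<partial>M)
      = (\<integral>\<^sup>+\<omega>. \<integral>\<^sup>+\<omega>'. (if P (U \<omega>) then \<phi> (h (U \<omega>) + v (V \<omega>')) else 0) \<partial>M \<partial>M)"
    by (rule nn_integral_indep_var[OF ind, where \<Phi> = "\<lambda>(u, w). if P u then \<phi> (h u + v w) else 0", simplified])
       measurable
  also have "\<dots> = (\<integral>\<^sup>+\<omega>. (if P (U \<omega>) then \<psi> (h (U \<omega>)) else 0) \<partial>M)"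
  proof -
    have "(\<integral>\<^sup>+\<omega>'. \<phi> (c + v (V \<omega>')) \<partial>M) = \<psi> c" for c
      using nn_integral_event_density[OF g, of "\<lambda>x. \<phi> (c + x)"] by (simp add: \<psi>_def)
    then show ?thesis
      by (intro nn_integral_cong) auto
  qed
  also have "\<dots> = (\<integral>\<^sup>+s. ennreal (r s) * \<psi> s \<partial>lborel)"
    by (rule nn_integral_event_density[OF r]) measurable
  also have "\<dots> = (\<integral>\<^sup>+z. ennreal (conv r g z) * \<phi> z \<partial>lborel)"
    unfolding \<psi>_def using integrable_event_density[OF r] event_density_nonneg[OF r] event_density_nonneg[OF g]
    by (intro nn_integral_conv_translate[OF _ _ g_bound]) simp_all
  finally show "(\<integral>\<^sup>+\<omega>. (if P (U \<omega>) then \<phi> (h (U \<omega>) + v (V \<omega>)) else 0) \<partial>M)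
      = (\<integral>\<^sup>+z. ennreal (conv r g z) * \<phi> z \<partial>lborel)" .
qed

end

section \<open>The random walk\<close>

(* Unlike measurable_component_singleton this has no side condition i \<in> I, so the measurable
   method can handle sums such as \<Sum>i\<in>{1..j}. w i under a quantifier over j. *)
lemma measurable_component_PiM_borel [measurable]:
  "(\<lambda>w. w i) \<in> borel_measurable (Pi\<^sub>M I (\<lambda>_. borel :: real measure))"
proof (cases "i \<in> I")
  case False
  have "(\<lambda>_. undefined) \<in> borel_measurable (Pi\<^sub>M I (\<lambda>_. borel :: real measure))"
    by simp
  moreover have "w i = undefined" if "w \<in> space (Pi\<^sub>M I (\<lambda>_. borel :: real measure))" for w
    using that False unfolding space_PiM by (rule PiE_arb)
  ultimately show ?thesis
    using measurable_cong[of "Pi\<^sub>M I (\<lambda>_. borel)" "\<lambda>w. w i" "\<lambda>_. undefined"] by blast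
qed simp

lemma psum_0 [simp]: "psum X 0 \<omega> = 0"
  by (simp add: psum_def)

lemma psum_split:
  assumes "k \<le> n"
  shows "psum X n \<omega> = psum X k \<omega> + (\<Sum>i\<in>{k<..n}. X i \<omega>)"
proof -
  have "{1..n} = {1..k} \<union> {k<..n}"
    using assms by auto
  then show ?thesis
    unfolding psum_def by (simp add: sum.union_disjoint ivl_disj_int)
qed

lemma first_crossing_exists:
  fixes s :: "nat \<Rightarrow> real"
  assumes "s 0 < y" "1 \<le> n"
  shows "\<exists>k\<in>{1..n}. (\<forall>j<k. s j < y) \<and> (k < n \<longrightarrow> y \<le> s k)"
proof -
  define k where "k = (LEAST k. k = n \<or> y \<le> s k)"
  have k: "k = n \<or> y \<le> s k"
    unfolding k_def by (rule LeastI[of _ n]) simp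
  have "k \<le> n"
    unfolding k_def by (rule Least_le) simp
  have below: "s j < y" if "j < k" for j
    using not_less_Least[OF that[unfolded k_def]] by auto
  have "k \<noteq> 0"
    using k assms by (cases k) auto
  with \<open>k \<le> n\<close> k below show ?thesis
    by (intro bexI[of _ k]) auto
qed

lemma first_crossing_unique:
  fixes s :: "nat \<Rightarrow> real"
  assumes "\<forall>j<k. s j < y" "k < n \<longrightarrow> y \<le> s k" "k \<le> n"
    and "\<forall>j<k'. s j < y" "k' < n \<longrightarrow> y \<le> s k'" "k' \<le> n"
  shows "k = k'"
proof -
  have not_earlier: "\<not> i < i'" if "i < n \<longrightarrow> y \<le> s i" "\<forall>j<i'. s j < y" "i' \<le> n" for i i'
    using that by fastforce
  show ?thesis
    using not_earlier[OF assms(2,4,6)] not_earlier[OF assms(5,1,3)] by simp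
qed

(* R_m(., y) of the paper, see Rdens_eq_below_density; the value at m = 0 is junk,
   as S_0 = 0 has no density. *)
fun below_density :: "real \<Rightarrow> nat \<Rightarrow> real \<Rightarrow> real" where
  "below_density y 0 = (\<lambda>_. 0)"
| "below_density y (Suc 0) = fdens 1"
| "below_density y (Suc (Suc m)) = conv (\<lambda>s. below_density y (Suc m) s * indicator {..<y} s) (fdens 1)"

definition passage_density :: "real \<Rightarrow> nat \<Rightarrow> nat \<Rightarrow> real \<Rightarrow> real" where
  "passage_density y n k = conv (\<lambda>s. below_density y k s * indicator {y..} s) (fdens (n - k))"

lemma below_density_eq_0:
  assumes "0 < y" "1 \<le> m" "y + 1 \<le> t"
  shows "below_density y m t = 0"
proof (cases "m = 1")
  case False
  with assms have "2 \<le> m"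
    by simp
  then obtain m' where m: "m = Suc (Suc m')"
    by (metis add_2_eq_Suc le_Suc_ex)
  have integrand: "(\<lambda>s. below_density y (Suc m') s * indicator {..<y} s * fdens 1 (t - s)) = (\<lambda>_. 0)"
    using assms by (auto simp: fdens_def indicator_def fun_eq_iff)
  show ?thesis
    unfolding m below_density.simps conv_def integrand by simp
qed (use assms in \<open>auto simp: fdens_def\<close>)

locale exp_walk = prob_space +
  fixes X :: "nat \<Rightarrow> 'a \<Rightarrow> real"
  assumes indep_X: "indep_vars (\<lambda>_. borel) X {1..}"
    and distributed_X:
      "\<And>i. 1 \<le> i \<Longrightarrow> distributed M lborel (X i) (\<lambda>t. ennreal (if t \<le> 1 then exp (t - 1) else 0))"
begin

lemma event_density_X: "1 \<le> i \<Longrightarrow> event_density M (\<lambda>_. True) (X i) (fdens 1)"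
  unfolding fdens_1 using distributed_X by (intro distributed_imp_event_density) auto

lemma borel_measurable_X [measurable]: "1 \<le> i \<Longrightarrow> X i \<in> borel_measurable M"
  using event_density_X by (rule event_density_measurable)

lemma borel_measurable_psum [measurable]: "psum X j \<in> borel_measurable M"
  unfolding psum_def by (intro borel_measurable_sum borel_measurable_X) simp

lemma event_density_sum_X:
  assumes "finite J" "J \<noteq> {}" "J \<subseteq> {1..}"
  shows "event_density M (\<lambda>_. True) (\<lambda>\<omega>. \<Sum>i\<in>J. X i \<omega>) (fdens (card J))"
  using assms
proof (induction J rule: finite_ne_induct)
  case (singleton j)
  then show ?case
    using event_density_X[of j] by simp
next
  case (insert j J)
  then have IH: "event_density M (\<lambda>_. True) (\<lambda>\<omega>. \<Sum>i\<in>J. X i \<omega>) (fdens (card J))"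
    by simp
  have "1 \<le> card J"
    using insert by (simp add: Suc_leI card_gt_0_iff)
  have "event_density M (\<lambda>\<omega>. True)
      (\<lambda>\<omega>. (\<lambda>w. \<Sum>i\<in>J. w i) (restrict (\<lambda>i. X i \<omega>) J) + (\<lambda>w. w j) (restrict (\<lambda>i. X i \<omega>) {j}))
      (conv (fdens (card J)) (fdens 1))"
    using insert event_density_X[of j] IH
    by (intro event_density_add_indep[OF indep_var_restrict[OF indep_X, of J "{j}"] _ _ _ _ _ fdens_le_1])
       auto
  moreover have "conv (fdens (card J)) (fdens 1) = fdens (card (insert j J))"
  proof
    fix z
    have "ennreal (conv (fdens (card J)) (fdens 1) z) = ennreal (fdens (Suc (card J)) z)"
      using integrable_event_density[OF IH] fdens_Suc_convolution[OF \<open>1 \<le> card J\<close>]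
      by (simp add: nn_integral_conv[OF _ _ abs_fdens_le_1, symmetric] fdens_nonneg)
    then show "conv (fdens (card J)) (fdens 1) z = fdens (card (insert j J)) z"
      using insert by (simp add: fdens_nonneg conv_nonneg)
  qed
  ultimately show ?case
    using insert by (simp add: add.commute)
qed

lemma event_density_psum_add:
  assumes "k < n" and [measurable]: "Measurable.pred (Pi\<^sub>M {1..k} (\<lambda>_. borel)) P"
    and A: "\<And>\<omega>. A \<omega> \<longleftrightarrow> P (restrict (\<lambda>i. X i \<omega>) {1..k})"
    and r: "event_density M A (psum X k) r"
  shows "event_density M A (psum X n) (conv r (fdens (n - k)))"
proof -
  have A_eq: "A = (\<lambda>\<omega>. P (restrict (\<lambda>i. X i \<omega>) {1..k}))"
    using A by auto
  have psum_k: "psum X k = (\<lambda>\<omega>. (\<lambda>w. \<Sum>i\<in>{1..k}. w i) (restrict (\<lambda>i. X i \<omega>) {1..k}))"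
    by (auto simp: psum_def)
  have psum_n: "psum X n = (\<lambda>\<omega>. (\<lambda>w. \<Sum>i\<in>{1..k}. w i) (restrict (\<lambda>i. X i \<omega>) {1..k})
      + (\<lambda>w. \<Sum>i\<in>{k<..n}. w i) (restrict (\<lambda>i. X i \<omega>) {k<..n}))"
    using psum_split[of k n X] \<open>k < n\<close> by (auto simp: psum_def)
  have g: "event_density M (\<lambda>_. True) (\<lambda>\<omega>. (\<lambda>w. \<Sum>i\<in>{k<..n}. w i) (restrict (\<lambda>i. X i \<omega>) {k<..n}))
      (fdens (n - k))"
    using event_density_sum_X[of "{k<..n}"] \<open>k < n\<close> by (simp add: subset_eq)
  have ind: "indep_var (Pi\<^sub>M {1..k} (\<lambda>_. borel)) (\<lambda>\<omega>. restrict (\<lambda>i. X i \<omega>) {1..k})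
      (Pi\<^sub>M {k<..n} (\<lambda>_. borel)) (\<lambda>\<omega>. restrict (\<lambda>i. X i \<omega>) {k<..n})"
    by (rule indep_var_restrict[OF indep_X]) auto
  show ?thesis
    unfolding A_eq psum_n
    by (rule event_density_add_indep[where h = "\<lambda>w. \<Sum>i\<in>{1..k}. w i" and v = "\<lambda>w. \<Sum>i\<in>{k<..n}. w i",
          OF ind _ _ _ r[unfolded A_eq psum_k] g fdens_le_1])
       measurable
qed

lemma event_density_below_density:
  assumes "0 < y" "1 \<le> m"
  shows "event_density M (\<lambda>\<omega>. \<forall>j<m. psum X j \<omega> < y) (psum X m) (below_density y m)"
  using \<open>1 \<le> m\<close>
proof (induction m rule: nat_induct_at_least)
  case base
  then show ?case
    using event_density_X[of 1] \<open>0 < y\<close> by (simp add: psum_def)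
next
  case (Suc m)
  have "event_density M (\<lambda>\<omega>. (\<forall>j<m. psum X j \<omega> < y) \<and> psum X m \<omega> \<in> {..<y}) (psum X m)
      (\<lambda>s. below_density y m s * indicator {..<y} s)"
    by (rule event_density_restrict[OF Suc.IH]) simp
  then have "event_density M (\<lambda>\<omega>. (\<forall>j<m. psum X j \<omega> < y) \<and> psum X m \<omega> \<in> {..<y}) (psum X (Suc m))
      (conv (\<lambda>s. below_density y m s * indicator {..<y} s) (fdens (Suc m - m)))"
    by (rule event_density_psum_add[OF lessI, where P = "\<lambda>w. \<forall>j<Suc m. (\<Sum>i\<in>{1..j}. w i) < y", rotated 2])
       (auto simp: less_Suc_eq psum_def)
  moreover have "(\<lambda>\<omega>. (\<forall>j<m. psum X j \<omega> < y) \<and> psum X m \<omega> \<in> {..<y}) = (\<lambda>\<omega>. \<forall>j<Suc m. psum X j \<omega> < y)"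
    by (auto simp: less_Suc_eq)
  moreover have "below_density y (Suc m) = conv (\<lambda>s. below_density y m s * indicator {..<y} s) (fdens 1)"
    using \<open>1 \<le> m\<close> by (cases m) auto
  ultimately show ?case
    by simp
qed

lemma integrable_below_density: "0 < y \<Longrightarrow> 1 \<le> m \<Longrightarrow> integrable lborel (below_density y m)"
  by (rule integrable_event_density[OF event_density_below_density])

lemma isCont_below_density:
  assumes "0 < y" "2 \<le> m"
  shows "isCont (below_density y m) t"
proof -
  obtain m' where m: "m = Suc (Suc m')"
    using assms by (metis add_2_eq_Suc le_Suc_ex)
  have "integrable lborel (\<lambda>s. below_density y (Suc m') s * indicator {..<y} s)"
    using integrable_event_density[OF event_density_restrict[OF event_density_below_density]] assms
    by simp
  then show ?thesis
    unfolding m by (auto intro!: isCont_conv[OF _ _ abs_fdens_le_1 isCont_fdens])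
qed

lemma event_density_first_passage:
  assumes "0 < y" "1 \<le> k" "k < n"
  shows "event_density M (\<lambda>\<omega>. (\<forall>j<k. psum X j \<omega> < y) \<and> y \<le> psum X k \<omega>) (psum X n)
    (passage_density y n k)"
proof -
  have "event_density M (\<lambda>\<omega>. (\<forall>j<k. psum X j \<omega> < y) \<and> psum X k \<omega> \<in> {y..}) (psum X k)
      (\<lambda>s. below_density y k s * indicator {y..} s)"
    using assms by (intro event_density_restrict event_density_below_density) auto
  then have "event_density M (\<lambda>\<omega>. (\<forall>j<k. psum X j \<omega> < y) \<and> psum X k \<omega> \<in> {y..}) (psum X n)
      (passage_density y n k)"
    unfolding passage_density_def
    by (rule event_density_psum_add[OF \<open>k < n\<close>,
          where P = "\<lambda>w. (\<forall>j<k. (\<Sum>i\<in>{1..j}. w i) < y) \<and> y \<le> (\<Sum>i\<in>{1..k}. w i)", rotated 2])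
       (auto simp: psum_def)
  then show ?thesis
    by simp
qed

lemma isCont_passage_density:
  assumes "0 < y" "1 \<le> k"
  shows "isCont (passage_density y n k) t"
proof -
  have "integrable lborel (\<lambda>s. below_density y k s * indicator {y..} s)"
    using integrable_event_density[OF event_density_restrict[OF event_density_below_density]] assms
    by simp
  then show ?thesis
    unfolding passage_density_def by (auto intro: isCont_conv[OF _ _ abs_fdens_le_1 isCont_fdens])
qed

lemma fdens_decomposition:
  assumes "0 < y" "2 \<le> n"
  shows "fdens n z = below_density y n z + (\<Sum>k\<in>{1..<n}. passage_density y n k z)"
proof -
  \<comment> \<open>\<open>E k\<close> is the event \<open>min n \<tau> = k\<close>, where \<open>\<tau>\<close> is the first index with \<open>y \<le> S\<^sub>\<tau>\<close>.\<close>
  define E where "E k \<omega> \<longleftrightarrow> (\<forall>j<k. psum X j \<omega> < y) \<and> (k < n \<longrightarrow> y \<le> psum X k \<omega>)" for k \<omega>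
  define r where "r k = (if k < n then passage_density y n k else below_density y n)" for k
  have "event_density M (\<lambda>\<omega>. \<exists>k\<in>{1..n}. E k \<omega>) (psum X n) (\<lambda>z. \<Sum>k\<in>{1..n}. r k z)"
  proof (rule event_density_Bex)
    show "event_density M (E k) (psum X n) (r k)" if "k \<in> {1..n}" for k
      using that assms event_density_first_passage[of y k n] event_density_below_density[of y n]
      by (cases "k < n") (auto simp: E_def[abs_def] r_def)
    show "k = k'" if "k \<in> {1..n}" "k' \<in> {1..n}" "E k \<omega>" "E k' \<omega>" for k k' \<omega>
      using that by (intro first_crossing_unique[of k "\<lambda>j. psum X j \<omega>" y n]) (auto simp: E_def)
  qed simp_all
  moreover have "(\<lambda>\<omega>. \<exists>k\<in>{1..n}. E k \<omega>) = (\<lambda>_. True)"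
    using first_crossing_exists[of "\<lambda>j. psum X j _" y n] assms by (auto simp: E_def)
  moreover have "event_density M (\<lambda>_. True) (psum X n) (fdens n)"
    using event_density_sum_X[of "{1..n}"] assms by (simp add: psum_def[abs_def])
  moreover have "isCont (r k) t" if "k \<in> {1..n}" for k t
    using that assms by (simp add: r_def isCont_passage_density isCont_below_density)
  ultimately have "fdens n = (\<lambda>z. \<Sum>k\<in>{1..n}. r k z)"
    using assms by (intro event_density_unique[of M "\<lambda>_. True" "psum X n"] isCont_fdens_ge_2 continuous_intros)
                   simp_all
  moreover have "{1..n} = insert n {1..<n}"
    using assms by auto
  ultimately show ?thesis
    by (simp add: r_def)
qed

lemma passage_density_eq_integral:
  assumes "0 < y" "1 \<le> k"
  shows "(\<lambda>\<xi>. below_density y k (y + \<xi>) * fdens (n - k) (z - y - \<xi>)) integrable_on {0..1}"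
    and "passage_density y n k z = integral {0..1} (\<lambda>\<xi>. below_density y k (y + \<xi>) * fdens (n - k) (z - y - \<xi>))"
  using conv_indicator_atLeast_eq_integral[OF integrable_below_density[OF assms] borel_measurable_fdens
      abs_fdens_le_1 below_density_eq_0[OF assms less_imp_le]]
  by (simp_all add: passage_density_def)

lemma Rdens_eq_below_density:
  assumes "0 < y" "1 \<le> m" "isCont (below_density y m) t"
  shows "Rdens M X m t y = below_density y m t"
  unfolding Rdens_def using assms by (intro deriv_measure_event_density event_density_below_density)

lemma integral_Rdens_eq_sum_passage_density:
  assumes "0 < y" "2 \<le> n"
  shows "integral {0..1} (\<lambda>\<xi>. \<Sum>k=1..n-1.
      Rdens M X k (y + \<xi>) y * (fdens (n - k) (u - y - \<xi>) - fdens (n - k) (v - y - \<xi>)))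
    = (\<Sum>k\<in>{1..<n}. passage_density y n k u - passage_density y n k v)"
proof -
  define G where "G k z \<xi> = below_density y k (y + \<xi>) * fdens (n - k) (z - y - \<xi>)" for k z \<xi>
  have G: "G k z integrable_on {0..1}" "passage_density y n k z = integral {0..1} (G k z)"
    if "k \<in> {1..<n}" for k z
    using that passage_density_eq_integral[OF \<open>0 < y\<close>] unfolding G_def[abs_def] by auto
  \<comment> \<open>\<open>R\<^sub>1 = f\<^sub>1\<close> jumps at \<open>1\<close>, i.e. at \<open>\<xi> = 1 - y\<close>.\<close>
  have "integral {0..1} (\<lambda>\<xi>. \<Sum>k=1..n-1.
        Rdens M X k (y + \<xi>) y * (fdens (n - k) (u - y - \<xi>) - fdens (n - k) (v - y - \<xi>)))
      = integral {0..1} (\<lambda>\<xi>. \<Sum>k\<in>{1..<n}. G k u \<xi> - G k v \<xi>)"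
  proof (rule integral_spike[of "{1 - y}"])
    fix \<xi>
    assume \<xi>: "\<xi> \<in> {0..1} - {1 - y}"
    have "isCont (below_density y k) (y + \<xi>)" if "k \<in> {1..<n}" for k
      using that \<xi> \<open>0 < y\<close> isCont_fdens[of "y + \<xi>" 1] by (cases "k = 1") (auto intro: isCont_below_density)
    then have "Rdens M X k (y + \<xi>) y = below_density y k (y + \<xi>)" if "k \<in> {1..<n}" for k
      using that \<open>0 < y\<close> by (intro Rdens_eq_below_density) auto
    moreover have "{1..n-1} = {1..<n}"
      using assms by auto
    ultimately show "(\<Sum>k\<in>{1..<n}. G k u \<xi> - G k v \<xi>) = (\<Sum>k=1..n-1.
        Rdens M X k (y + \<xi>) y * (fdens (n - k) (u - y - \<xi>) - fdens (n - k) (v - y - \<xi>)))"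
      by (auto simp: G_def right_diff_distrib intro: sum.cong)
  qed simp
  also have "\<dots> = (\<Sum>k\<in>{1..<n}. integral {0..1} (\<lambda>\<xi>. G k u \<xi> - G k v \<xi>))"
    by (intro integral_sum integrable_diff G) simp_all
  also have "\<dots> = (\<Sum>k\<in>{1..<n}. passage_density y n k u - passage_density y n k v)"
    by (intro sum.cong refl) (simp add: integral_diff G)
  finally show ?thesis .
qed

end

theorem lemma4:
  fixes M :: "'a measure" and X :: "nat \<Rightarrow> 'a \<Rightarrow> real"
    and n :: nat and x y a :: real
  assumes "prob_space M"
    and "prob_space.indep_vars M (\<lambda>_. borel) X {1..}"
    and "\<And>i. i \<ge> 1 \<Longrightarrow>
           distributed M lborel (X i) (\<lambda>t. ennreal (if t \<le> 1 then exp (t - 1) else 0))"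
    and "n \<ge> 2" and "y > 0" and "a \<ge> 1"
  shows "Rdens M X n x y = fdens n x - fdens n (y + a)
    + integral {0..1} (\<lambda>\<xi>. \<Sum>k=1..n-1.
        Rdens M X k (y + \<xi>) y * (fdens (n - k) (a - \<xi>) - fdens (n - k) (x - y - \<xi>)))"
proof -
  interpret exp_walk M X
    using assms(1-3) by (intro exp_walk.intro exp_walk_axioms.intro) auto
  have "0 < y" "2 \<le> n"
    using assms by auto
  have "Rdens M X n x y = below_density y n x"
    using \<open>0 < y\<close> \<open>2 \<le> n\<close> by (intro Rdens_eq_below_density isCont_below_density) auto
  moreover have "below_density y n (y + a) = 0"
    using \<open>0 < y\<close> \<open>2 \<le> n\<close> \<open>a \<ge> 1\<close> by (intro below_density_eq_0) auto
  ultimately show ?thesis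
    using fdens_decomposition[OF \<open>0 < y\<close> \<open>2 \<le> n\<close>, of x] fdens_decomposition[OF \<open>0 < y\<close> \<open>2 \<le> n\<close>, of "y + a"]
      integral_Rdens_eq_sum_passage_density[OF \<open>0 < y\<close> \<open>2 \<le> n\<close>, of "y + a" x]
    by (simp add: sum_subtractf)
qed

end
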